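(* For every integer $n\ge 3$ and every graph $G$, \[ \kappa'(G\times K_n)=\min\{\,n(n-1)\kappa'(G),\ (n-1)\delta(G)\,\}. \]
   Context: All graphs are finite, simple and undirected. $\kappa'(G)$ denotes the edge connectivity of $G$, the minimum number of edges whose removal disconnects $G$; it is $0$ if $G$ is disconnected or has only one vertex. $\delta(G)$ is the minimum degree of $G$ and $K_n$ is the complete graph on $n$ vertices. The direct product $G\times H$ has vertex set $V(G)\times V(H)$. Two vertices $(x,u),(y,v)$ are adjacent if and only if $xy\in E(G)$ and $uv\in E(H)$. *)

theory Defs
  imports Main
begin

definition simple_graph :: "'a set \<Rightarrow> 'a set set \<Rightarrow> bool" where
  "simple_graph V E \<longleftrightarrow> finite V \<and> V \<noteq> {} \<and>
     (\<forall>e\<in>E. \<exists>u v. e = {u, v} \<and> u \<noteq> v \<and> u \<in> V \<and> v \<in> V)"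

definition adj :: "'a set set \<Rightarrow> 'a \<Rightarrow> 'a \<Rightarrow> bool" where
  "adj E u v \<longleftrightarrow> {u, v} \<in> E"

definition connected_graph :: "'a set \<Rightarrow> 'a set set \<Rightarrow> bool" where
  "connected_graph V E \<longleftrightarrow> (\<forall>u\<in>V. \<forall>v\<in>V. (adj E)\<^sup>*\<^sup>* u v)"

definition edge_connectivity :: "'a set \<Rightarrow> 'a set set \<Rightarrow> nat" where
  "edge_connectivity V E =
     (if \<not> connected_graph V E \<or> card V \<le> 1 then 0
      else Min {card F | F. F \<subseteq> E \<and> \<not> connected_graph V (E - F)})"

definition degree :: "'a set \<Rightarrow> 'a set set \<Rightarrow> 'a \<Rightarrow> nat" where
  "degree V E u = card {v \<in> V. {u, v} \<in> E}"

definition min_degree :: "'a set \<Rightarrow> 'a set set \<Rightarrow> nat" where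
  "min_degree V E = Min (degree V E ` V)"

definition dprod_verts :: "'a set \<Rightarrow> 'b set \<Rightarrow> ('a \<times> 'b) set" where
  "dprod_verts V1 V2 = V1 \<times> V2"

definition dprod_edges :: "'a set set \<Rightarrow> 'b set set \<Rightarrow> ('a \<times> 'b) set set" where
  "dprod_edges E1 E2 = {{(x, u), (y, v)} | x y u v. {x, y} \<in> E1 \<and> {u, v} \<in> E2}"

definition K_verts :: "nat \<Rightarrow> nat set" where
  "K_verts n = {0..<n}"

definition K_edges :: "nat \<Rightarrow> nat set set" where
  "K_edges n = {{i, j} | i j. i < n \<and> j < n \<and> i \<noteq> j}"

end

theory Submission
  imports Defs
begin

text \<open>
  The whole argument is phrased in terms of edge cuts: for a proper nonempty vertex set X,
  the cut of X is the set of edges with exactly one end in X.  In a simple graph every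
  disconnecting edge set contains a cut and every cut disconnects, so \<open>\<kappa>'\<close> is the
  minimum size of a cut (for connected graphs with at least two vertices).

  Two kinds of cuts of \<open>G \<times> K\<^sub>n\<close> give the upper bounds: the lift \<open>A \<times> [n]\<close> of a cut A of
  G has exactly \<open>n(n-1)\<close> times as many edges, and a single vertex \<open>(x,0)\<close> has
  \<open>(n-1) deg x\<close> edges.  For the lower bound, a vertex set X of the product either is a
  union of whole fibres \<open>{x} \<times> [n]\<close> (so it is a lifted cut), or it splits some fibre of a
  vertex x; then a counting argument in \<open>K\<^sub>n\<close> shows that each neighbour y of x contributes
  at least \<open>n - 1\<close> cut edges between the fibres of x and y.  The degenerate cases
  (G disconnected or a single vertex) are absorbed by the same bounds.
\<close>

lemma simple_graph_edge:
  assumes "simple_graph V E" and "{x, y} \<in> E"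
  shows "x \<in> V \<and> y \<in> V \<and> x \<noteq> y"
proof -
  obtain u v where "{x, y} = {u, v}" "u \<noteq> v" "u \<in> V" "v \<in> V"
    using assms unfolding simple_graph_def by blast
  then show ?thesis by (auto simp: doubleton_eq_iff)
qed

lemma simple_graph_finite_edges:
  assumes "simple_graph V E"
  shows "finite E"
proof -
  have "E \<subseteq> Pow V"
    using assms unfolding simple_graph_def by fastforce
  moreover have "finite V" using assms unfolding simple_graph_def by blast
  ultimately show ?thesis by (meson finite_Pow_iff finite_subset)
qed

definition cut_edges :: "'a set \<Rightarrow> 'a set set \<Rightarrow> 'a set \<Rightarrow> 'a set set" where
  "cut_edges V E X = {e \<in> E. \<exists>a\<in>X. \<exists>b\<in>V - X. e = {a, b}}"

definition proper_part :: "'a set \<Rightarrow> 'a set \<Rightarrow> bool" where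
  "proper_part V X \<longleftrightarrow> X \<subseteq> V \<and> X \<noteq> {} \<and> X \<noteq> V"

lemma reach_stays:
  assumes "(adj F)\<^sup>*\<^sup>* a b" and "a \<in> X"
    and "\<And>x y. {x, y} \<in> F \<Longrightarrow> x \<in> X \<Longrightarrow> y \<in> X"
  shows "b \<in> X"
  using assms(1,2) by (induction rule: rtranclp_induct) (auto simp: adj_def intro: assms(3))

lemma cut_disconnects:
  assumes G: "simple_graph V E" and X: "proper_part V X" and F: "cut_edges V E X \<subseteq> F"
  shows "\<not> connected_graph V (E - F)"
proof
  assume conn: "connected_graph V (E - F)"
  obtain a b where ab: "a \<in> X" "b \<in> V" "b \<notin> X"
    using X unfolding proper_part_def by blast
  have "a \<in> V" using ab X unfolding proper_part_def by blast
  then have "(adj (E - F))\<^sup>*\<^sup>* a b" using conn ab unfolding connected_graph_def by blast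
  then have "b \<in> X"
  proof (rule reach_stays)
    fix x y assume xy: "{x, y} \<in> E - F" "x \<in> X"
    show "y \<in> X"
    proof (rule ccontr)
      assume "y \<notin> X"
      with xy simple_graph_edge[OF G] have "{x, y} \<in> cut_edges V E X"
        unfolding cut_edges_def by blast
      with xy F show False by blast
    qed
  qed (rule ab(1))
  with ab show False by blast
qed

(* Conversely, every disconnecting edge set contains the cut of a reachability class. *)
lemma disconnecting_contains_cut:
  assumes "\<not> connected_graph V (E - F)"
  obtains X where "proper_part V X" and "cut_edges V E X \<subseteq> F"
proof -
  obtain u v where uv: "u \<in> V" "v \<in> V" "\<not> (adj (E - F))\<^sup>*\<^sup>* u v"
    using assms unfolding connected_graph_def by blast
  define X where "X = {w \<in> V. (adj (E - F))\<^sup>*\<^sup>* u w}"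
  have "proper_part V X"
    using uv unfolding proper_part_def X_def by blast
  moreover have "cut_edges V E X \<subseteq> F"
  proof
    fix e assume "e \<in> cut_edges V E X"
    then obtain a b where ab: "e \<in> E" "a \<in> X" "b \<in> V - X" "e = {a, b}"
      unfolding cut_edges_def by blast
    show "e \<in> F"
    proof (rule ccontr)
      assume "e \<notin> F"
      then have "adj (E - F) a b" using ab by (simp add: adj_def)
      then have "b \<in> X" using ab unfolding X_def by (auto intro: rtranclp.rtrancl_into_rtrancl)
      with ab show False by blast
    qed
  qed
  ultimately show thesis by (rule that)
qed

lemma edge_connectivity_le_cut:
  assumes G: "simple_graph V E" and X: "proper_part V X"
  shows "edge_connectivity V E \<le> card (cut_edges V E X)"
proof (cases "\<not> connected_graph V E \<or> card V \<le> 1")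
  case True
  then show ?thesis by (simp add: edge_connectivity_def)
next
  case False
  let ?S = "{card F | F. F \<subseteq> E \<and> \<not> connected_graph V (E - F)}"
  have "finite ?S"
    using simple_graph_finite_edges[OF G] by (auto intro: finite_subset[of _ "card ` Pow E"])
  moreover have "card (cut_edges V E X) \<in> ?S"
    using cut_disconnects[OF G X] unfolding cut_edges_def by blast
  ultimately show ?thesis using False by (simp add: edge_connectivity_def)
qed

lemma edge_connectivity_attained:
  assumes G: "simple_graph V E" and conn: "connected_graph V E" and two: "\<not> card V \<le> 1"
  obtains X where "proper_part V X" and "card (cut_edges V E X) = edge_connectivity V E"
proof -
  let ?S = "{card F | F. F \<subseteq> E \<and> \<not> connected_graph V (E - F)}"
  have finE: "finite E" by (rule simple_graph_finite_edges[OF G])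
  have "finite ?S" using finE by (auto intro: finite_subset[of _ "card ` Pow E"])
  obtain u where u: "u \<in> V" using G unfolding simple_graph_def by blast
  have "V \<noteq> {u}" using two by auto
  then have "proper_part V {u}" using u unfolding proper_part_def by blast
  then have "\<not> connected_graph V (E - E)"
    by (rule cut_disconnects[OF G]) (auto simp: cut_edges_def)
  then have "card E \<in> ?S" by blast
  with \<open>finite ?S\<close> have "Min ?S \<in> ?S" using Min_in by blast
  then obtain F0 where F0: "F0 \<subseteq> E" "\<not> connected_graph V (E - F0)"
      and card_F0: "card F0 = edge_connectivity V E"
    using conn two by (auto simp: edge_connectivity_def)
  obtain X where X: "proper_part V X" and XF0: "cut_edges V E X \<subseteq> F0"
    using disconnecting_contains_cut[OF F0(2)] .
  have "card (cut_edges V E X) \<le> edge_connectivity V E"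
    using card_mono[OF finite_subset[OF F0(1) finE] XF0] card_F0 by simp
  moreover have "edge_connectivity V E \<le> card (cut_edges V E X)"
    by (rule edge_connectivity_le_cut[OF G X])
  ultimately show thesis using that X by simp
qed

lemma min_degree_le:
  assumes "simple_graph V E" and "x \<in> V"
  shows "min_degree V E \<le> degree V E x"
  using assms unfolding simple_graph_def min_degree_def by (intro Min_le) auto

lemma min_degree_attained:
  assumes "simple_graph V E"
  obtains x where "x \<in> V" and "degree V E x = min_degree V E"
proof -
  have "min_degree V E \<in> degree V E ` V"
    using assms unfolding simple_graph_def min_degree_def by (intro Min_in) auto
  then show thesis using that by auto
qed

lemma K_edge_iff: "{i, j} \<in> K_edges n \<longleftrightarrow> i < n \<and> j < n \<and> i \<noteq> j"
  unfolding K_edges_def by (auto simp: doubleton_eq_iff)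

lemma prod_edge_iff:
  "{(x, i), (y, j)} \<in> dprod_edges E (K_edges n) \<longleftrightarrow> {x, y} \<in> E \<and> i < n \<and> j < n \<and> i \<noteq> j"
proof
  assume "{(x, i), (y, j)} \<in> dprod_edges E (K_edges n)"
  then obtain x' y' u v where eq: "{(x, i), (y, j)} = {(x', u), (y', v)}"
      and "{x', y'} \<in> E" "{u, v} \<in> K_edges n"
    unfolding dprod_edges_def by blast
  then show "{x, y} \<in> E \<and> i < n \<and> j < n \<and> i \<noteq> j"
    by (auto simp: K_edge_iff doubleton_eq_iff insert_commute)
qed (auto simp: dprod_edges_def K_edge_iff)

lemma prod_edge_cases:
  assumes "e \<in> dprod_edges E (K_edges n)"
  obtains x y i j where "e = {(x, i), (y, j)}" and "{x, y} \<in> E" and "i < n" "j < n" "i \<noteq> j"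
  using assms unfolding dprod_edges_def by (auto simp: K_edge_iff)

lemma simple_graph_prod:
  assumes G: "simple_graph V E" and n: "0 < n"
  shows "simple_graph (V \<times> {0..<n}) (dprod_edges E (K_edges n))"
proof -
  have "finite (V \<times> {0..<n})" "V \<times> {0..<n} \<noteq> {}"
    using G n unfolding simple_graph_def by auto
  moreover have "\<exists>p q. e = {p, q} \<and> p \<noteq> q \<and> p \<in> V \<times> {0..<n} \<and> q \<in> V \<times> {0..<n}"
    if e: "e \<in> dprod_edges E (K_edges n)" for e
  proof -
    obtain x y i j where "e = {(x, i), (y, j)}" "{x, y} \<in> E" "i < n" "j < n"
      using e by (rule prod_edge_cases)
    then show ?thesis
      by (intro exI[of _ "(x, i)"] exI[of _ "(y, j)"]) (auto dest: simple_graph_edge[OF G])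
  qed
  ultimately show ?thesis unfolding simple_graph_def by blast
qed

(* The cut of a union of fibres \<open>A \<times> [n]\<close> consists of \<open>n(n-1)\<close> copies of each edge of the
  cut of A in G, one for every ordered pair of distinct indices. *)
lemma card_lifted_cut:
  shows "card (cut_edges (V \<times> {0..<n}) (dprod_edges E (K_edges n)) (A \<times> {0..<n}))
           = n * (n - 1) * card (cut_edges V E A)"
    (is "card ?cut = _")
proof -
  define D where "D = {(a, b). a \<in> A \<and> b \<in> V - A \<and> {a, b} \<in> E}"
  define Q where "Q = {(i, j). i < n \<and> j < n \<and> (i::nat) \<noteq> j}"
  define h :: "('a \<times> 'a) \<times> nat \<times> nat \<Rightarrow> ('a \<times> nat) set"
    where "h = (\<lambda>((a, b), (i, j)). {(a, i), (b, j)})"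
  have lift: "?cut = h ` (D \<times> Q)"
  proof
    show "h ` (D \<times> Q) \<subseteq> ?cut"
    proof
      fix e assume "e \<in> h ` (D \<times> Q)"
      then obtain a b i j where ab: "a \<in> A" "b \<in> V - A" "{a, b} \<in> E"
          and ij: "i < n" "j < n" "i \<noteq> j" and e: "e = {(a, i), (b, j)}"
        unfolding D_def Q_def h_def by auto
      have "e \<in> dprod_edges E (K_edges n)" using ab ij e by (simp add: prod_edge_iff)
      moreover have "(a, i) \<in> A \<times> {0..<n}" "(b, j) \<in> V \<times> {0..<n} - A \<times> {0..<n}"
        using ab ij by auto
      ultimately show "e \<in> ?cut" unfolding cut_edges_def e by blast
    qed
  next
    show "?cut \<subseteq> h ` (D \<times> Q)"
    proof
      fix e assume "e \<in> ?cut"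
      then obtain a i q where e: "e \<in> dprod_edges E (K_edges n)" "a \<in> A" "i < n"
          "q \<in> V \<times> {0..<n} - A \<times> {0..<n}" "e = {(a, i), q}"
        unfolding cut_edges_def by force
      obtain b j where q: "q = (b, j)" by (cases q)
      have "{a, b} \<in> E" "j < n" "i \<noteq> j" "b \<in> V - A"
        using e q by (auto simp: prod_edge_iff)
      then have "((a, b), (i, j)) \<in> D \<times> Q" using e unfolding D_def Q_def by simp
      moreover have "e = h ((a, b), (i, j))" using e q unfolding h_def by simp
      ultimately show "e \<in> h ` (D \<times> Q)" by blast
    qed
  qed
  have "inj_on h (D \<times> Q)"
    unfolding inj_on_def D_def h_def by (auto simp: doubleton_eq_iff)
  then have "card (h ` (D \<times> Q)) = card D * card Q"
    by (simp add: card_image card_cartesian_product)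
  moreover have "card D = card (cut_edges V E A)"
  proof (rule bij_betw_same_card)
    show "bij_betw (\<lambda>(a, b). {a, b}) D (cut_edges V E A)"
      unfolding bij_betw_def inj_on_def D_def cut_edges_def by (auto simp: doubleton_eq_iff)
  qed
  moreover have "card Q = n * (n - 1)"
  proof -
    have "Q = {0..<n} \<times> {0..<n} - (\<lambda>i. (i, i)) ` {0..<n}"
      unfolding Q_def by auto
    moreover have "card ((\<lambda>i. (i, i)) ` {0..<n}) = n"
      by (subst card_image) (auto simp: inj_on_def)
    ultimately have "card Q = n * n - n"
      by (simp add: card_Diff_subset card_cartesian_product image_subset_iff)
    then show ?thesis by (simp add: diff_mult_distrib2)
  qed
  ultimately show ?thesis using lift by (simp add: mult.commute)
qed

lemma proper_part_lift:
  fixes n :: nat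
  assumes "proper_part V A" and "0 < n"
  shows "proper_part (V \<times> {0..<n}) (A \<times> {0..<n})"
  using assms unfolding proper_part_def by (auto simp: times_eq_iff)

lemma card_singleton_cut_le:
  assumes "finite V"
  shows "card (cut_edges (V \<times> {0..<n}) (dprod_edges E (K_edges n)) {(x, 0)})
           \<le> (n - 1) * degree V E x"
proof -
  define N where "N = {y \<in> V. {x, y} \<in> E}"
  have "cut_edges (V \<times> {0..<n}) (dprod_edges E (K_edges n)) {(x, 0)}
          \<subseteq> (\<lambda>(y, j). {(x, 0), (y, j)}) ` (N \<times> {1..<n})"
  proof
    fix e assume "e \<in> cut_edges (V \<times> {0..<n}) (dprod_edges E (K_edges n)) {(x, 0)}"
    then obtain y j where e: "e \<in> dprod_edges E (K_edges n)" "y \<in> V" "e = {(x, 0), (y, j)}"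
      unfolding cut_edges_def by force
    then have "y \<in> N" "j \<in> {1..<n}" unfolding N_def by (auto simp: prod_edge_iff)
    then show "e \<in> (\<lambda>(y, j). {(x, 0), (y, j)}) ` (N \<times> {1..<n})" using e by force
  qed
  moreover have "finite N" using assms unfolding N_def by simp
  ultimately have "card (cut_edges (V \<times> {0..<n}) (dprod_edges E (K_edges n)) {(x, 0)})
                     \<le> card (N \<times> {1..<n})"
    by (meson card_image_le card_mono finite_SigmaI finite_atLeastLessThan finite_imageI order_trans)
  then show ?thesis by (simp add: card_cartesian_product N_def degree_def mult.commute)
qed

lemma exists_third: "3 \<le> (n::nat) \<Longrightarrow> \<exists>k < n. k \<noteq> i \<and> k \<noteq> j"
  by presburger

(* For \<open>n \<ge> 3\<close> the product of a connected graph with at least two vertices is connected: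
  a fibre is connected through a third index at a neighbour, and paths of G lift. *)
lemma prod_connected:
  assumes G: "simple_graph V E" and conn: "connected_graph V E" and two: "\<not> card V \<le> 1"
    and n: "3 \<le> n"
  shows "connected_graph (V \<times> {0..<n}) (dprod_edges E (K_edges n))"
proof -
  let ?R = "adj (dprod_edges E (K_edges n))"
  have neighbour: "\<exists>y. {x, y} \<in> E" if x: "x \<in> V" for x
  proof -
    have "V \<noteq> {x}" using two by auto
    then obtain z where z: "z \<in> V" "z \<noteq> x" using x by blast
    then have "(adj E)\<^sup>*\<^sup>* x z" using conn x unfolding connected_graph_def by blast
    then show ?thesis using z(2) by (cases rule: converse_rtranclpE) (auto simp: adj_def)
  qed
  have same_fibre: "?R\<^sup>*\<^sup>* (x, i) (x, j)" if "x \<in> V" "i < n" "j < n" for x i j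
  proof (cases "i = j")
    case False
    obtain y where y: "{x, y} \<in> E" using neighbour[OF \<open>x \<in> V\<close>] by blast
    obtain k where k: "k < n" "k \<noteq> i" "k \<noteq> j" using exists_third[OF n] by blast
    have "?R (x, i) (y, k)" "?R (y, k) (x, j)"
      using y k that by (simp_all add: adj_def prod_edge_iff insert_commute)
    then show ?thesis by (meson rtranclp.rtrancl_into_rtrancl rtranclp.rtrancl_refl)
  qed simp
  have along_edge: "?R\<^sup>*\<^sup>* (x, i) (y, j)" if "{x, y} \<in> E" "i < n" "j < n" for x y i j
  proof -
    obtain k where k: "k < n" "k \<noteq> j" using exists_third[OF n] by blast
    have "?R\<^sup>*\<^sup>* (x, i) (x, k)" using same_fibre k that simple_graph_edge[OF G] by blast
    moreover have "?R (x, k) (y, j)" using that k by (simp add: adj_def prod_edge_iff)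
    ultimately show ?thesis by (meson rtranclp.rtrancl_into_rtrancl)
  qed
  have lift_path: "\<forall>i < n. \<forall>j < n. ?R\<^sup>*\<^sup>* (x, i) (y, j)" if "(adj E)\<^sup>*\<^sup>* x y" "x \<in> V" for x y
    using that(1)
  proof (induction rule: rtranclp_induct)
    case base
    then show ?case using same_fibre that(2) by blast
  next
    case (step y z)
    have "0 < n" using n by simp
    have "?R\<^sup>*\<^sup>* (x, i) (z, j)" if "i < n" "j < n" for i j
    proof -
      have "?R\<^sup>*\<^sup>* (x, i) (y, 0)" using step.IH that \<open>0 < n\<close> by blast
      moreover have "?R\<^sup>*\<^sup>* (y, 0) (z, j)"
        using along_edge step.hyps(2) that \<open>0 < n\<close> by (simp add: adj_def)
      ultimately show ?thesis by (rule rtranclp_trans)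
    qed
    then show ?case by blast
  qed
  show ?thesis using lift_path conn unfolding connected_graph_def by auto
qed

(* Each \<open>j \<notin> {i\<^sub>0, i\<^sub>1}\<close> is paired
  with \<open>i\<^sub>0\<close> or \<open>i\<^sub>1\<close>, and one more pair has second entry in \<open>{i\<^sub>0, i\<^sub>1}\<close>. *)
lemma offdiag_cross_pairs:
  fixes n :: nat
  assumes n: "3 \<le> n" and i: "i0 < n" "i1 < n" "i0 \<in> A" "i1 \<notin> A"
  shows "n - 1 \<le> card {(i, j). i < n \<and> j < n \<and> i \<noteq> j \<and> (i \<in> A \<longleftrightarrow> j \<notin> B)}"
    (is "_ \<le> card ?T")
proof -
  have fin: "finite ?T" by (rule finite_subset[of _ "{0..<n} \<times> {0..<n}"]) auto
  define S where "S = {0..<n} - {i0, i1}"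
  define g where "g = (\<lambda>j. if j \<in> B then (i1, j) else (i0, j))"
  have ne: "i0 \<noteq> i1" using i by blast
  have card_S: "card S = n - 2" unfolding S_def using i ne by (subst card_Diff_subset) auto
  have "inj_on g S" unfolding inj_on_def g_def by (auto split: if_splits)
  have gT: "g ` S \<subseteq> ?T" unfolding g_def S_def using i by auto
  obtain e where e: "e \<in> ?T" "snd e \<in> {i0, i1}"
  proof (cases "i0 \<in> B")
    case True then show ?thesis using that[of "(i1, i0)"] i ne by auto
  next
    case i0B: False
    show ?thesis
    proof (cases "i1 \<in> B")
      case False then show ?thesis using that[of "(i0, i1)"] i ne by auto
    next
      case i1B: True
      obtain k where k: "k < n" "k \<noteq> i0" "k \<noteq> i1" using exists_third[OF n] by blast
      show ?thesis
        using that[of "(k, i0)"] that[of "(k, i1)"] i k i0B i1B by (cases "k \<in> A") auto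
    qed
  qed
  have "snd e \<notin> S" "\<forall>p \<in> g ` S. snd p \<in> S" using e(2) unfolding S_def g_def by auto
  then have "e \<notin> g ` S" by blast
  then have "card (insert e (g ` S)) = n - 1"
    using \<open>inj_on g S\<close> card_S n by (simp add: card_image S_def)
  moreover have "card (insert e (g ` S)) \<le> card ?T" using e(1) gT fin by (intro card_mono) auto
  ultimately show ?thesis by simp
qed

lemma unsaturated_cut_lower_bound:
  assumes G: "simple_graph V E" and n: "3 \<le> n" and x: "x \<in> V"
    and split: "i0 < n" "i1 < n" "(x, i0) \<in> X" "(x, i1) \<notin> X"
  shows "(n - 1) * degree V E x \<le> card (cut_edges (V \<times> {0..<n}) (dprod_edges E (K_edges n)) X)"
    (is "_ \<le> card ?cut")
proof -
  define N where "N = {y \<in> V. {x, y} \<in> E}"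
  define T where "T = (\<lambda>y. {(i, j). i < n \<and> j < n \<and> i \<noteq> j \<and>
                                 (i \<in> {i. (x, i) \<in> X} \<longleftrightarrow> j \<notin> {j. (y, j) \<in> X})})"
  define h :: "'a \<times> nat \<times> nat \<Rightarrow> ('a \<times> nat) set"
    where "h = (\<lambda>(y, i, j). {(x, i), (y, j)})"
  have finite_cut: "finite ?cut"
  proof (rule finite_subset)
    show "?cut \<subseteq> dprod_edges E (K_edges n)" unfolding cut_edges_def by blast
    have "0 < n" using n by simp
    then show "finite (dprod_edges E (K_edges n))"
      by (rule simple_graph_finite_edges[OF simple_graph_prod[OF G]])
  qed
  have finite_T: "finite (T y)" for y
    unfolding T_def by (rule finite_subset[of _ "{0..<n} \<times> {0..<n}"]) auto
  have N: "y \<in> V" "y \<noteq> x" if "y \<in> N" for y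
    using that simple_graph_edge[OF G] unfolding N_def by auto
  have "inj_on h (Sigma N T)"
    unfolding inj_on_def h_def using N by (auto simp: doubleton_eq_iff)
  have "h ` Sigma N T \<subseteq> ?cut"
  proof
    fix e assume "e \<in> h ` Sigma N T"
    then obtain y i j where e: "e = {(x, i), (y, j)}" "y \<in> N" "(i, j) \<in> T y"
      unfolding h_def by auto
    have edge: "e \<in> dprod_edges E (K_edges n)" and ij: "i < n" "j < n"
      using e unfolding N_def T_def by (auto simp: prod_edge_iff)
    have ends: "(x, i) \<in> V \<times> {0..<n}" "(y, j) \<in> V \<times> {0..<n}" using x N[OF e(2)] ij by auto
    show "e \<in> ?cut"
    proof (cases "(x, i) \<in> X")
      case True
      then have "(y, j) \<notin> X" using e(3) unfolding T_def by auto
      then show ?thesis using edge ends True e(1) unfolding cut_edges_def by blast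
    next
      case False
      then have "(y, j) \<in> X" using e(3) unfolding T_def by auto
      moreover have "e = {(y, j), (x, i)}" using e(1) by (simp add: insert_commute)
      ultimately show ?thesis using edge ends False unfolding cut_edges_def by blast
    qed
  qed
  have "(n - 1) * degree V E x = (\<Sum>y\<in>N. n - 1)" unfolding degree_def N_def by simp
  also have "\<dots> \<le> (\<Sum>y\<in>N. card (T y))"
    unfolding T_def by (intro sum_mono offdiag_cross_pairs[OF n split(1,2)]) (use split in auto)
  also have "\<dots> = card (Sigma N T)"
    using G finite_T unfolding N_def simple_graph_def by (simp add: card_SigmaI)
  also have "\<dots> = card (h ` Sigma N T)" using \<open>inj_on h (Sigma N T)\<close> by (simp add: card_image)
  also have "\<dots> \<le> card ?cut" by (rule card_mono[OF finite_cut \<open>h ` Sigma N T \<subseteq> ?cut\<close>])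
  finally show ?thesis .
qed

(* Every cut of the product has at least \<open>min (n(n-1)\<kappa>'(G)) ((n-1)\<delta>(G))\<close> edges:
  either X splits some fibre, or it is the lift of a proper vertex set of G. *)
lemma prod_cut_lower_bound:
  assumes G: "simple_graph V E" and n: "3 \<le> n"
    and X: "proper_part (V \<times> {0..<n}) X"
  shows "min (n * (n - 1) * edge_connectivity V E) ((n - 1) * min_degree V E)
           \<le> card (cut_edges (V \<times> {0..<n}) (dprod_edges E (K_edges n)) X)"
proof (cases "\<exists>x\<in>V. \<exists>i0 < n. \<exists>i1 < n. (x, i0) \<in> X \<and> (x, i1) \<notin> X")
  case True
  then obtain x i0 i1 where x: "x \<in> V" "i0 < n" "i1 < n" "(x, i0) \<in> X" "(x, i1) \<notin> X"
    by blast
  have "(n - 1) * min_degree V E \<le> (n - 1) * degree V E x"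
    using min_degree_le[OF G x(1)] by simp
  also have "\<dots> \<le> card (cut_edges (V \<times> {0..<n}) (dprod_edges E (K_edges n)) X)"
    by (rule unsaturated_cut_lower_bound[OF G n x])
  finally show ?thesis by simp
next
  case False
  define A where "A = {x \<in> V. (x, 0) \<in> X}"
  have "0 < n" using n by simp
  have saturated: "(x, i) \<in> X \<longleftrightarrow> (x, j) \<in> X" if "x \<in> V" "i < n" "j < n" for x i j
    using False that by blast
  have X_V: "X \<subseteq> V \<times> {0..<n}" using X unfolding proper_part_def by blast
  have X_eq: "X = A \<times> {0..<n}"
  proof (intro equalityI subsetI)
    fix p assume "p \<in> X"
    with X_V obtain x i where "p = (x, i)" "x \<in> V" "i < n" by auto
    then show "p \<in> A \<times> {0..<n}"
      using \<open>p \<in> X\<close> saturated[of x i 0] \<open>0 < n\<close> unfolding A_def by simp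
  next
    fix p assume "p \<in> A \<times> {0..<n}"
    then obtain x i where "p = (x, i)" "x \<in> V" "(x, 0) \<in> X" "i < n" unfolding A_def by auto
    then show "p \<in> X" using saturated[of x 0 i] \<open>0 < n\<close> by simp
  qed
  have "A \<noteq> {}" "A \<noteq> V" using X \<open>0 < n\<close> unfolding X_eq proper_part_def by auto
  then have "proper_part V A" unfolding proper_part_def A_def by blast
  have "n * (n - 1) * edge_connectivity V E \<le> n * (n - 1) * card (cut_edges V E A)"
    using edge_connectivity_le_cut[OF G \<open>proper_part V A\<close>] by simp
  also have "\<dots> = card (cut_edges (V \<times> {0..<n}) (dprod_edges E (K_edges n)) X)"
    unfolding X_eq by (simp only: card_lifted_cut)
  finally show ?thesis by simp
qed

(* Upper bound by the cut of a single vertex of minimum degree. *)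
lemma prod_le_degree_bound:
  assumes G: "simple_graph V E" and n: "2 \<le> n"
  shows "edge_connectivity (V \<times> {0..<n}) (dprod_edges E (K_edges n)) \<le> (n - 1) * min_degree V E"
proof -
  obtain x where x: "x \<in> V" "degree V E x = min_degree V E"
    using min_degree_attained[OF G] .
  have "(x, 1) \<in> V \<times> {0..<n}" "(x, 1) \<notin> {(x, 0::nat)}" "(x, 0) \<in> V \<times> {0..<n}"
    using x n by simp_all
  then have "proper_part (V \<times> {0..<n}) {(x, 0)}"
    unfolding proper_part_def by blast
  then have "edge_connectivity (V \<times> {0..<n}) (dprod_edges E (K_edges n))
               \<le> card (cut_edges (V \<times> {0..<n}) (dprod_edges E (K_edges n)) {(x, 0)})"
    using n by (intro edge_connectivity_le_cut simple_graph_prod[OF G]) simp_all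
  also have "\<dots> \<le> (n - 1) * degree V E x"
    using G unfolding simple_graph_def by (blast intro: card_singleton_cut_le)
  finally show ?thesis using x(2) by simp
qed

(* Upper bound by lifting a minimum cut of G; if G is disconnected or trivial, the
  product has a cut with no edges. *)
lemma prod_le_connectivity_bound:
  assumes G: "simple_graph V E" and n: "2 \<le> n"
  shows "edge_connectivity (V \<times> {0..<n}) (dprod_edges E (K_edges n))
           \<le> n * (n - 1) * edge_connectivity V E"
proof -
  have prod_bound: "edge_connectivity (V \<times> {0..<n}) (dprod_edges E (K_edges n))
                      \<le> n * (n - 1) * card (cut_edges V E A)" if A: "proper_part V A" for A
  proof -
    have "proper_part (V \<times> {0..<n}) (A \<times> {0..<n})"
      using A n by (intro proper_part_lift) simp_all
    then have "edge_connectivity (V \<times> {0..<n}) (dprod_edges E (K_edges n))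
                 \<le> card (cut_edges (V \<times> {0..<n}) (dprod_edges E (K_edges n)) (A \<times> {0..<n}))"
      using n by (intro edge_connectivity_le_cut simple_graph_prod[OF G]) simp_all
    then show ?thesis by (simp only: card_lifted_cut)
  qed
  consider "connected_graph V E \<and> \<not> card V \<le> 1" | "\<not> connected_graph V E" | "card V \<le> 1"
    by blast
  then show ?thesis
  proof cases
    case 1
    then obtain A where "proper_part V A" "card (cut_edges V E A) = edge_connectivity V E"
      using edge_connectivity_attained[OF G] by blast
    then show ?thesis using prod_bound by metis
  next
    case 2
    then have "\<not> connected_graph V (E - {})" by simp
    then obtain A where "proper_part V A" "cut_edges V E A \<subseteq> {}"
      by (rule disconnecting_contains_cut)
    then show ?thesis using prod_bound[of A] by simp
  next
    case 3
    obtain x where x: "x \<in> V" "degree V E x = min_degree V E"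
      using min_degree_attained[OF G] .
    have "finite V" using G unfolding simple_graph_def by blast
    then have "V = {x}" using 3 x by (auto simp: card_le_Suc0_iff_eq)
    then have "degree V E x = 0"
      using simple_graph_edge[OF G, of x x] unfolding degree_def by auto
    then show ?thesis using prod_le_degree_bound[OF G n] x(2) by simp
  qed
qed

theorem corollary1:
  fixes V :: "'a set" and E :: "'a set set" and n :: nat
  assumes "n \<ge> 3" and "simple_graph V E"
  shows "edge_connectivity (dprod_verts V (K_verts n)) (dprod_edges E (K_edges n)) =
         min (n * (n - 1) * edge_connectivity V E) ((n - 1) * min_degree V E)"
proof -
  note n = assms(1) and G = assms(2)
  let ?V' = "V \<times> {0..<n}" and ?E' = "dprod_edges E (K_edges n)"
  have "edge_connectivity ?V' ?E' \<le> min (n * (n - 1) * edge_connectivity V E) ((n - 1) * min_degree V E)"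
    using prod_le_connectivity_bound[OF G] prod_le_degree_bound[OF G] n by simp
  moreover have "min (n * (n - 1) * edge_connectivity V E) ((n - 1) * min_degree V E)
                   \<le> edge_connectivity ?V' ?E'"
  proof (cases "connected_graph ?V' ?E' \<and> \<not> card ?V' \<le> 1")
    case True
    have "simple_graph ?V' ?E'" using n by (intro simple_graph_prod[OF G]) simp
    then obtain X where "proper_part ?V' X" "card (cut_edges ?V' ?E' X) = edge_connectivity ?V' ?E'"
      using edge_connectivity_attained True by blast
    then show ?thesis using prod_cut_lower_bound[OF G n] by metis
  next
    case False
    have "\<not> (connected_graph V E \<and> \<not> card V \<le> 1)"
    proof
      assume G_conn: "connected_graph V E \<and> \<not> card V \<le> 1"
      then have "2 * 3 \<le> card V * n" using n by (intro mult_le_mono) simp_all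
      then have "\<not> card ?V' \<le> 1" by (simp add: card_cartesian_product)
      with False prod_connected[OF G _ _ n] G_conn show False by blast
    qed
    then have "edge_connectivity V E = 0" by (auto simp: edge_connectivity_def)
    then show ?thesis by simp
  qed
  ultimately show ?thesis unfolding dprod_verts_def K_verts_def by (rule antisym)
qed

end
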